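(* Let $T$ be the linear operator on $L^2(0,\pi/2)$ defined by $$(Tf)(v)=\int_0^{\pi/2} f(u)K_1(u,v)\,du=\int_0^{(\pi/2)-v} f(u)\,du,$$ where $K_1(u,v)=1$ if $u+v<\pi/2$ and $K_1(u,v)=0$ otherwise. Then $T$ is a compact self-adjoint operator. Its eigenvalues are exactly the numbers $1/(4k+1)$ for $k\in\mathbf{Z}$, each of multiplicity one, and the corresponding eigenfunctions, which are mutually orthogonal, are $u\mapsto\cos((4k+1)u)$. *)

theory Defs
  imports "HOL-Analysis.Analysis"
begin

text \<open>The interval (0, pi/2) with Lebesgue measure; real-valued L^2 is modelled by
  measurable square-integrable functions, equality in L^2 being equality almost everywhere.\<close>

definition Ihalf :: "real set" where
  "Ihalf = {0<..<pi/2}"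

abbreviation M :: "real measure" where
  "M \<equiv> lebesgue_on Ihalf"

definition sq_int :: "(real \<Rightarrow> real) \<Rightarrow> bool" where
  "sq_int f \<longleftrightarrow> f \<in> borel_measurable M \<and> integrable M (\<lambda>u. (f u)^2)"

definition l2_inner :: "(real \<Rightarrow> real) \<Rightarrow> (real \<Rightarrow> real) \<Rightarrow> real" where
  "l2_inner f g = (LINT u|M. f u * g u)"

definition l2_norm :: "(real \<Rightarrow> real) \<Rightarrow> real" where
  "l2_norm f = sqrt (l2_inner f f)"

definition K1 :: "real \<Rightarrow> real \<Rightarrow> real" where
  "K1 u v = (if u + v < pi/2 then 1 else 0)"

definition Top :: "(real \<Rightarrow> real) \<Rightarrow> (real \<Rightarrow> real)" where
  "Top f v = (LINT u|M. f u * K1 u v)"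

definition compact_op :: "((real \<Rightarrow> real) \<Rightarrow> (real \<Rightarrow> real)) \<Rightarrow> bool" where
  "compact_op T \<longleftrightarrow> (\<forall>f. sq_int f \<longrightarrow> sq_int (T f)) \<and>
     (\<forall>fs :: nat \<Rightarrow> real \<Rightarrow> real. (\<forall>n. sq_int (fs n)) \<and> (\<exists>B. \<forall>n. l2_norm (fs n) \<le> B) \<longrightarrow>
        (\<exists>r g. strict_mono r \<and> sq_int g \<and>
           (\<lambda>n. l2_norm (\<lambda>v. T (fs (r n)) v - g v)) \<longlonglongrightarrow> 0))"

definition self_adjoint_op :: "((real \<Rightarrow> real) \<Rightarrow> (real \<Rightarrow> real)) \<Rightarrow> bool" where
  "self_adjoint_op T \<longleftrightarrow> (\<forall>f g. sq_int f \<and> sq_int g \<longrightarrow> l2_inner (T f) g = l2_inner f (T g))"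

definition eigenspace_op :: "((real \<Rightarrow> real) \<Rightarrow> (real \<Rightarrow> real)) \<Rightarrow> real \<Rightarrow> (real \<Rightarrow> real) set" where
  "eigenspace_op T \<mu> = {f. sq_int f \<and> (AE v in M. T f v = \<mu> * f v)}"

definition is_eigenvalue :: "((real \<Rightarrow> real) \<Rightarrow> (real \<Rightarrow> real)) \<Rightarrow> real \<Rightarrow> bool" where
  "is_eigenvalue T \<mu> \<longleftrightarrow> (\<exists>f \<in> eigenspace_op T \<mu>. \<not> (AE u in M. f u = 0))"

end

theory Submission
  imports Defs "HOL-Library.Diagonal_Subsequence"
begin

(* Since Top f v is the inner product of f with K1(., v), Cauchy-Schwarz gives
   |Top f x - Top f y| <= ||f|| sqrt |x - y| and |Top f v| <= ||f|| sqrt (pi/2).  A bounded sequence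
   is therefore mapped to a bounded equicontinuous family, which has a pointwise convergent
   subsequence (diagonal argument over the rationals); dominated convergence turns this into
   L^2 convergence.  Self-adjointness is Fubini for the symmetric kernel.

   If Top f = mu f with mu <> 0, then g = Top f is continuous and g v = (1/mu) * int_0^(pi/2 - v) g,
   so P x = int_0^x g solves P' x = P (pi/2 - x) / mu with P 0 = 0.  The energy
   (P x - A sin (x/mu))^2 + (P (pi/2 - x) - A cos (x/mu))^2, A = P (pi/2), is constant and vanishes
   at 0, hence f = c cos (u/mu) almost everywhere, and c <> 0 forces sin (pi/(2 mu)) = 1, i.e.
   mu = 1/(4k+1).  The value 0 is excluded by the Lebesgue differentiation theorem, since Top f = 0
   says that all integrals of f over (0, x) vanish. *)

section \<open>Square-integrable functions on the interval\<close>

lemma Ihalf_lmeasurable: "Ihalf \<in> lmeasurable"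
  by (simp add: Ihalf_def)

lemma finite_measure_M: "finite_measure M"
  by (rule finite_measure_lebesgue_on[OF Ihalf_lmeasurable])

lemma measure_M_Ihalf: "measure M Ihalf = pi/2"
  using Ihalf_lmeasurable by (simp add: measure_restrict_space Ihalf_def)

lemma integrable_M_bounded:
  fixes h :: "real \<Rightarrow> real"
  assumes "h \<in> borel_measurable M" and "\<And>x. x \<in> Ihalf \<Longrightarrow> \<bar>h x\<bar> \<le> C"
  shows "integrable M h"
  using assms
  by (intro Bochner_Integration.integrable_bound[OF finite_measure.integrable_const[OF finite_measure_M, of C]])
     (auto intro!: AE_I2 intro: order_trans[OF _ abs_ge_self])

lemma sq_int_bounded:
  assumes "h \<in> borel_measurable M" and "\<And>x. x \<in> Ihalf \<Longrightarrow> \<bar>h x\<bar> \<le> C"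
  shows "sq_int h"
  unfolding sq_int_def
proof
  show "integrable M (\<lambda>u. (h u)^2)"
    using assms by (intro integrable_M_bounded[where C = "C^2"])
      (auto simp flip: abs_le_square_iff intro: order_trans[OF _ abs_ge_self])
qed fact

lemma sq_int_continuous:
  assumes "continuous_on {0..pi/2} h"
  shows "sq_int h"
proof -
  have "bounded (h ` {0..pi/2})"
    by (rule compact_imp_bounded[OF compact_continuous_image[OF assms compact_Icc]])
  then obtain C where C: "\<And>x. x \<in> {0..pi/2} \<Longrightarrow> norm (h x) \<le> C"
    unfolding bounded_iff by blast
  have "continuous_on Ihalf h"
    using assms by (rule continuous_on_subset) (auto simp: Ihalf_def)
  then show ?thesis
    using C by (intro sq_int_bounded[where C = C] continuous_imp_measurable_on_sets_lebesgue)
      (auto simp: Ihalf_def)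
qed

lemma sq_int_integrable_mult:
  assumes f: "sq_int f" and g: "sq_int g"
  shows "integrable M (\<lambda>u. f u * g u)"
proof (rule Bochner_Integration.integrable_bound)
  show "integrable M (\<lambda>u. (f u)^2 + (g u)^2)"
    using f g by (simp add: sq_int_def)
  show "(\<lambda>u. f u * g u) \<in> borel_measurable M"
    using f g by (auto simp: sq_int_def)
  show "AE u in M. norm (f u * g u) \<le> norm ((f u)^2 + (g u)^2)"
  proof (intro AE_I2)
    fix u
    have "\<bar>f u * g u\<bar> \<le> (f u)^2 + (g u)^2"
      using sum_squares_bound[of "\<bar>f u\<bar>" "\<bar>g u\<bar>"] abs_ge_zero[of "f u * g u"]
      unfolding power2_abs abs_mult by linarith
    then show "norm (f u * g u) \<le> norm ((f u)^2 + (g u)^2)"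
      by simp
  qed
qed

lemma sq_int_const: "sq_int (\<lambda>_. c)"
  by (rule sq_int_bounded[where C = "\<bar>c\<bar>"]) simp_all

lemma sq_int_integrable:
  assumes "sq_int f"
  shows "integrable M f"
  using sq_int_integrable_mult[OF assms sq_int_const[of 1]] by simp

lemma discriminant_le_if_quadratic_nonneg:
  fixes a b c :: real
  assumes nonneg: "\<And>s. 0 \<le> a + 2 * s * b + s^2 * c" and "0 \<le> c"
  shows "b^2 \<le> a * c"
proof (cases "c = 0")
  case True
  have "b = 0"
  proof (rule ccontr)
    assume "b \<noteq> 0"
    then have "a + 2 * (- (a + 1) / (2 * b)) * b + (- (a + 1) / (2 * b))^2 * c = -1"
      using True by (simp add: field_simps)
    with nonneg show False
      by (metis neg_0_le_iff_le not_one_le_zero)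
  qed
  with True show ?thesis by simp
next
  case False
  with \<open>0 \<le> c\<close> have "c > 0" by simp
  have "a + 2 * (- b / c) * b + (- b / c)^2 * c = a - b^2 / c"
    using \<open>c > 0\<close> by (simp add: field_simps power2_eq_square)
  with nonneg have "b^2 / c \<le> a"
    by (metis diff_ge_0_iff_ge)
  with \<open>c > 0\<close> show ?thesis
    by (simp add: pos_divide_le_eq mult.commute)
qed

lemma l2_inner_Cauchy_Schwarz:
  assumes f: "sq_int f" and g: "sq_int g"
  shows "\<bar>l2_inner f g\<bar> \<le> l2_norm f * l2_norm g"
proof -
  have "0 \<le> l2_inner f f + 2 * s * l2_inner f g + s^2 * l2_inner g g" for s
  proof -
    have "0 \<le> (LINT u|M. (f u + s * g u) * (f u + s * g u))"
      by (rule Bochner_Integration.integral_nonneg) simp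
    also have "\<dots> = (LINT u|M. f u * f u + 2 * s * (f u * g u) + s^2 * (g u * g u))"
      by (rule Bochner_Integration.integral_cong) (simp_all add: algebra_simps power2_eq_square)
    also have "\<dots> = l2_inner f f + 2 * s * l2_inner f g + s^2 * l2_inner g g"
      using sq_int_integrable_mult[OF f f] sq_int_integrable_mult[OF f g] sq_int_integrable_mult[OF g g]
      by (simp add: l2_inner_def Bochner_Integration.integral_add)
    finally show ?thesis .
  qed
  moreover have "0 \<le> l2_inner g g"
    unfolding l2_inner_def by (rule Bochner_Integration.integral_nonneg) simp
  ultimately have "(l2_inner f g)^2 \<le> l2_inner f f * l2_inner g g"
    by (rule discriminant_le_if_quadratic_nonneg)
  then have "sqrt ((l2_inner f g)^2) \<le> sqrt (l2_inner f f * l2_inner g g)"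
    by (rule real_sqrt_le_mono)
  then show ?thesis
    by (simp add: l2_norm_def real_sqrt_mult)
qed

section \<open>Continuity estimates for the integral operator\<close>

lemma ident_borel_measurable_lebesgue_on[measurable]:
  "(\<lambda>x. x) \<in> borel_measurable (lebesgue_on S)"
  using id_borel_measurable_lebesgue_on by (simp add: id_def)

lemma K1_measurable[measurable]: "(\<lambda>u. K1 u v) \<in> borel_measurable (lebesgue_on S)"
  unfolding K1_def by measurable

lemma Top_eq_l2_inner: "Top f v = l2_inner f (\<lambda>u. K1 u v)"
  by (simp add: Top_def l2_inner_def)

lemma sq_int_K1: "sq_int (\<lambda>u. K1 u v)"
  by (rule sq_int_bounded[where C = 1]) (measurable, simp add: K1_def)

lemma sq_int_K1_diff: "sq_int (\<lambda>u. K1 u x - K1 u y)"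
  by (rule sq_int_bounded[where C = 1]) (measurable, simp add: K1_def)

lemma l2_norm_K1_le: "l2_norm (\<lambda>u. K1 u v) \<le> sqrt (pi/2)"
proof -
  have "l2_inner (\<lambda>u. K1 u v) (\<lambda>u. K1 u v) \<le> (LINT u|M. 1)"
    unfolding l2_inner_def
    by (intro integral_mono integrable_M_bounded[where C = 1] finite_measure.integrable_const[OF finite_measure_M])
       (measurable, auto simp: K1_def)
  also have "\<dots> = pi/2"
    by (simp add: measure_M_Ihalf)
  finally show ?thesis
    unfolding l2_norm_def by (rule real_sqrt_le_mono)
qed

lemma K1_diff_sq_le:
  "(K1 u x - K1 u y) * (K1 u x - K1 u y) \<le> indicator {pi/2 - max x y .. pi/2 - min x y} u"
  by (cases "x \<le> y") (simp_all add: K1_def indicator_def max_def min_def)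

lemma l2_norm_K1_diff_le: "l2_norm (\<lambda>u. K1 u x - K1 u y) \<le> sqrt \<bar>x - y\<bar>"
proof -
  define J where "J = {pi/2 - max x y .. pi/2 - min x y}"
  have "l2_inner (\<lambda>u. K1 u x - K1 u y) (\<lambda>u. K1 u x - K1 u y) \<le> (LINT u|M. indicator J u)"
    unfolding l2_inner_def J_def
    by (intro integral_mono integrable_M_bounded[where C = 1] K1_diff_sq_le)
       (measurable, simp_all add: K1_def indicator_def)
  also have "\<dots> = measure lebesgue (J \<inter> Ihalf)"
    by (simp add: measure_restrict_space J_def Ihalf_def Int_commute)
  also have "\<dots> \<le> measure lebesgue J"
    by (rule measure_mono_fmeasurable) (auto simp: J_def Ihalf_def)
  also have "\<dots> = \<bar>x - y\<bar>"
    unfolding J_def by (cases "x \<le> y") (simp_all add: max_def min_def)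
  finally show ?thesis
    unfolding l2_norm_def by (rule real_sqrt_le_mono)
qed

lemma l2_norm_nonneg: "0 \<le> l2_norm f"
  unfolding l2_norm_def l2_inner_def by (simp add: Bochner_Integration.integral_nonneg)

lemma Top_bound:
  assumes "sq_int f"
  shows "\<bar>Top f v\<bar> \<le> l2_norm f * sqrt (pi/2)"
  unfolding Top_eq_l2_inner
  by (rule order_trans[OF l2_inner_Cauchy_Schwarz[OF assms sq_int_K1]
                         mult_left_mono[OF l2_norm_K1_le l2_norm_nonneg]])

lemma Top_Hoelder:
  assumes f: "sq_int f"
  shows "\<bar>Top f x - Top f y\<bar> \<le> l2_norm f * sqrt \<bar>x - y\<bar>"
proof -
  have "Top f x - Top f y = l2_inner f (\<lambda>u. K1 u x - K1 u y)"
    using sq_int_integrable_mult[OF f sq_int_K1, of x] sq_int_integrable_mult[OF f sq_int_K1, of y]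
    by (simp add: Top_eq_l2_inner l2_inner_def right_diff_distrib)
  also have "\<bar>\<dots>\<bar> \<le> l2_norm f * sqrt \<bar>x - y\<bar>"
    by (rule order_trans[OF l2_inner_Cauchy_Schwarz[OF f sq_int_K1_diff]
                           mult_left_mono[OF l2_norm_K1_diff_le l2_norm_nonneg]])
  finally show ?thesis .
qed

lemma continuous_Top:
  assumes "sq_int f"
  shows "continuous_on UNIV (Top f)"
proof -
  have "((\<lambda>y. Top f y - Top f x) \<longlongrightarrow> 0) (at x)" for x
  proof (rule Lim_null_comparison)
    show "\<forall>\<^sub>F y in at x. norm (Top f y - Top f x) \<le> l2_norm f * sqrt \<bar>y - x\<bar>"
      using Top_Hoelder[OF assms] by simp
    show "((\<lambda>y. l2_norm f * sqrt \<bar>y - x\<bar>) \<longlongrightarrow> 0) (at x)"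
      by (auto intro!: tendsto_eq_intros)
  qed
  then show ?thesis
    by (simp add: continuous_on_def LIM_zero_iff)
qed

lemma sq_int_Top: "sq_int f \<Longrightarrow> sq_int (Top f)"
  by (rule sq_int_continuous[OF continuous_on_subset[OF continuous_Top]]) auto

section \<open>Compactness\<close>

lemma subseq_convergent_on_countable:
  fixes h :: "nat \<Rightarrow> 'a \<Rightarrow> 'b::heine_borel"
  assumes "countable D" and bounded: "\<And>x. x \<in> D \<Longrightarrow> bounded (range (\<lambda>n. h n x))"
  obtains r where "strict_mono r" and "\<And>x. x \<in> D \<Longrightarrow> convergent (\<lambda>k. h (r k) x)"
proof (cases "D = {}")
  case True
  then show ?thesis
    using that[of id] by (simp add: strict_mono_def)
next
  case False
  define e where "e = from_nat_into D"
  have D: "D = range e"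
    using False \<open>countable D\<close> by (simp add: e_def)
  interpret subseqs "\<lambda>n s. convergent (\<lambda>k. h (s k) (e n))"
  proof
    fix n and s :: "nat \<Rightarrow> nat"
    have "bounded (range (\<lambda>k. h (s k) (e n)))"
      using bounded[of "e n"] D by (auto intro: bounded_subset)
    then obtain l r where "strict_mono r" "((\<lambda>k. h (s k) (e n)) \<circ> r) \<longlonglongrightarrow> l"
      using bounded_imp_convergent_subsequence by blast
    then show "\<exists>r. strict_mono r \<and> convergent (\<lambda>k. h ((s \<circ> r) k) (e n))"
      by (auto simp: convergent_def comp_def)
  qed
  have "convergent (\<lambda>k. h (diagseq k) (e n))" for n
  proof -
    have "convergent (\<lambda>k. h ((diagseq \<circ> (+) (Suc n)) k) (e n))"
      by (rule diagseq_holds) (auto dest: convergent_subseq_convergent simp: comp_def)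
    then show ?thesis
      using convergent_ignore_initial_segment[where m = "Suc n" and f = "\<lambda>k. h (diagseq k) (e n)"]
      by (simp add: add.commute)
  qed
  then show ?thesis
    using that[OF subseq_diagseq] D by auto
qed

lemma equicontinuous_subseq_convergent:
  fixes h :: "nat \<Rightarrow> real \<Rightarrow> 'b::heine_borel"
  assumes bounded: "\<And>x. bounded (range (\<lambda>n. h n x))"
    and equicont: "\<And>e. e > 0 \<Longrightarrow> \<exists>d>0. \<forall>n x y. dist x y < d \<longrightarrow> dist (h n x) (h n y) < e"
  obtains r where "strict_mono r" and "\<And>x. convergent (\<lambda>k. h (r k) x)"
proof -
  obtain r where r: "strict_mono r" and conv: "\<And>q. q \<in> \<rat> \<Longrightarrow> convergent (\<lambda>k. h (r k) q)"
    by (rule subseq_convergent_on_countable[OF countable_rat, where h = h]) (auto intro: bounded)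
  have "Cauchy (\<lambda>k. h (r k) x)" for x
  proof (rule metric_CauchyI)
    fix e :: real
    assume "e > 0"
    then obtain d where "d > 0" and d: "\<And>n y. dist x y < d \<Longrightarrow> dist (h n x) (h n y) < e/3"
      using equicont[of "e/3"] by auto
    obtain q where "q \<in> \<rat>" and "x < q" and "q < x + d"
      using Rats_dense_in_real[of x "x + d"] \<open>d > 0\<close> by auto
    then have xq: "dist x q < d"
      by (simp add: dist_real_def)
    obtain N where N: "\<And>m n. m \<ge> N \<Longrightarrow> n \<ge> N \<Longrightarrow> dist (h (r m) q) (h (r n) q) < e/3"
      using metric_CauchyD[OF convergent_Cauchy[OF conv[OF \<open>q \<in> \<rat>\<close>]], of "e/3"] \<open>e > 0\<close>
      by auto
    have "dist (h (r m) x) (h (r n) x) < e" if "m \<ge> N" "n \<ge> N" for m n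
    proof -
      have "dist (h (r m) x) (h (r n) x)
          \<le> dist (h (r m) x) (h (r m) q) + dist (h (r m) q) (h (r n) q) + dist (h (r n) x) (h (r n) q)"
        using dist_triangle[of "h (r m) x" "h (r n) x" "h (r m) q"]
              dist_triangle[of "h (r m) q" "h (r n) x" "h (r n) q"]
        by (simp add: dist_commute)
      also have "\<dots> < e/3 + e/3 + e/3"
        using d[OF xq] N[OF that] by (intro add_strict_mono)
      finally show ?thesis
        by simp
    qed
    then show "\<exists>N. \<forall>m\<ge>N. \<forall>n\<ge>N. dist (h (r m) x) (h (r n) x) < e"
      by blast
  qed
  then show ?thesis
    using that[OF r] Cauchy_convergent by blast
qed

lemma l2_norm_diff_tendsto_zero:
  fixes h :: "nat \<Rightarrow> real \<Rightarrow> real"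
  assumes meas: "\<And>n. h n \<in> borel_measurable M"
    and bounded: "\<And>n x. \<bar>h n x\<bar> \<le> C"
    and lim: "\<And>x. (\<lambda>n. h n x) \<longlonglongrightarrow> g x"
  shows "(\<lambda>n. l2_norm (\<lambda>x. h n x - g x)) \<longlonglongrightarrow> 0"
proof -
  have g_meas: "g \<in> borel_measurable M"
    by (rule borel_measurable_LIMSEQ_real[OF lim meas])
  have g_bounded: "\<bar>g x\<bar> \<le> C" for x
    by (rule LIMSEQ_le_const2[OF tendsto_rabs[OF lim]]) (use bounded in auto)
  have "(\<lambda>n. LINT x|M. (h n x - g x) * (h n x - g x)) \<longlonglongrightarrow> (LINT x|M. 0)"
  proof (rule integral_dominated_convergence[where w = "\<lambda>_. (2 * C)^2"])
    show "(\<lambda>x. (h n x - g x) * (h n x - g x)) \<in> borel_measurable M" for n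
      using meas[of n] g_meas by measurable
    show "integrable M (\<lambda>_. (2 * C)^2)"
      by (rule finite_measure.integrable_const[OF finite_measure_M])
    show "AE x in M. (\<lambda>n. (h n x - g x) * (h n x - g x)) \<longlonglongrightarrow> 0"
    proof (intro AE_I2)
      fix x
      have "(\<lambda>n. h n x - g x) \<longlonglongrightarrow> 0"
        by (rule LIM_zero[OF lim])
      from tendsto_mult[OF this this] show "(\<lambda>n. (h n x - g x) * (h n x - g x)) \<longlonglongrightarrow> 0"
        by simp
    qed
    show "AE x in M. norm ((h n x - g x) * (h n x - g x)) \<le> (2 * C)^2" for n
    proof (intro AE_I2)
      fix x
      have "\<bar>h n x - g x\<bar> \<le> 2 * C"
        using bounded[of n x] g_bounded[of x] by linarith
      from power_mono[OF this abs_ge_zero, of 2]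
      show "norm ((h n x - g x) * (h n x - g x)) \<le> (2 * C)^2"
        by (simp add: abs_mult power2_eq_square)
    qed
  qed simp
  then have "(\<lambda>n. sqrt (LINT x|M. (h n x - g x) * (h n x - g x))) \<longlonglongrightarrow> sqrt 0"
    by (intro tendsto_real_sqrt) simp
  then show ?thesis
    by (simp add: l2_norm_def l2_inner_def)
qed

lemma compact_op_Top: "compact_op Top"
  unfolding compact_op_def
proof (intro conjI allI impI sq_int_Top)
  fix fs :: "nat \<Rightarrow> real \<Rightarrow> real"
  assume "(\<forall>n. sq_int (fs n)) \<and> (\<exists>B. \<forall>n. l2_norm (fs n) \<le> B)"
  then obtain B where sq: "\<And>n. sq_int (fs n)" and B: "\<And>n. l2_norm (fs n) \<le> B"
    by blast
  define C where "C = B * sqrt (pi/2)"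
  have bounded: "\<bar>Top (fs n) x\<bar> \<le> C" for n x
    using order_trans[OF Top_bound[OF sq] mult_right_mono[OF B]] by (simp add: C_def)
  have equicont: "\<exists>d>0. \<forall>n x y. dist x y < d \<longrightarrow> dist (Top (fs n) x) (Top (fs n) y) < e"
    if "e > 0" for e
  proof (intro exI conjI allI impI)
    show "(e / (\<bar>B\<bar> + 1))^2 > 0"
      using \<open>e > 0\<close> by simp
    fix n and x y :: real
    assume "dist x y < (e / (\<bar>B\<bar> + 1))^2"
    then have "sqrt \<bar>x - y\<bar> < sqrt ((e / (\<bar>B\<bar> + 1))^2)"
      unfolding dist_real_def by (rule real_sqrt_less_mono)
    also have "\<dots> = e / (\<bar>B\<bar> + 1)"
      using \<open>e > 0\<close> by simp
    finally have "sqrt \<bar>x - y\<bar> < e / (\<bar>B\<bar> + 1)" .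
    then have "(\<bar>B\<bar> + 1) * sqrt \<bar>x - y\<bar> < e"
      by (simp add: field_simps)
    moreover have "l2_norm (fs n) * sqrt \<bar>x - y\<bar> \<le> (\<bar>B\<bar> + 1) * sqrt \<bar>x - y\<bar>"
      using B[of n] by (intro mult_right_mono) auto
    ultimately show "dist (Top (fs n) x) (Top (fs n) y) < e"
      using Top_Hoelder[OF sq, of n x y] by (simp add: dist_real_def)
  qed
  have "bounded (range (\<lambda>n. Top (fs n) x))" for x
    by (rule boundedI[where B = C]) (auto simp: bounded)
  from equicontinuous_subseq_convergent[where h = "\<lambda>n. Top (fs n)", OF this equicont]
  obtain r where r: "strict_mono r" and conv: "\<And>x. convergent (\<lambda>k. Top (fs (r k)) x)"
    by blast
  define g where "g x = lim (\<lambda>k. Top (fs (r k)) x)" for x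
  have lim: "(\<lambda>k. Top (fs (r k)) x) \<longlonglongrightarrow> g x" for x
    using conv[of x] by (simp add: g_def convergent_LIMSEQ_iff)
  have meas: "Top (fs (r k)) \<in> borel_measurable M" for k
    using sq_int_Top[OF sq] by (simp add: sq_int_def)
  have "sq_int g"
    by (intro sq_int_bounded[where C = C] borel_measurable_LIMSEQ_real[OF lim meas]
              LIMSEQ_le_const2[OF tendsto_rabs[OF lim]])
       (use bounded in auto)
  with r show "\<exists>r g. strict_mono r \<and> sq_int g \<and> (\<lambda>n. l2_norm (\<lambda>v. Top (fs (r n)) v - g v)) \<longlonglongrightarrow> 0"
    using l2_norm_diff_tendsto_zero[OF meas bounded lim] by blast
qed

section \<open>Self-adjointness\<close>

lemma (in pair_sigma_finite) integrable_product_mult: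
  fixes f :: "'a \<Rightarrow> real" and g :: "'b \<Rightarrow> real"
  assumes f: "integrable M1 f" and g: "integrable M2 g"
  shows "integrable (M1 \<Otimes>\<^sub>M M2) (\<lambda>(x, y). f x * g y)"
proof (rule Fubini_integrable)
  have [measurable]: "f \<in> borel_measurable M1" "g \<in> borel_measurable M2"
    using f g by auto
  show "(\<lambda>(x, y). f x * g y) \<in> borel_measurable (M1 \<Otimes>\<^sub>M M2)"
    by measurable
  show "integrable M1 (\<lambda>x. \<integral>y. norm ((\<lambda>(x, y). f x * g y) (x, y)) \<partial>M2)"
    using f by (simp add: abs_mult)
  show "AE x in M1. integrable M2 (\<lambda>y. (\<lambda>(x, y). f x * g y) (x, y))"
    using g by simp
qed

lemma K1_sym: "K1 u v = K1 v u"
  by (simp add: K1_def add.commute)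

lemma self_adjoint_op_Top: "self_adjoint_op Top"
  unfolding self_adjoint_op_def
proof (intro allI impI, elim conjE)
  fix f g
  assume f: "sq_int f" and g: "sq_int g"
  interpret M: finite_measure M
    by (rule finite_measure_M)
  interpret P: pair_sigma_finite M M
    by (simp add: pair_sigma_finite_def M.sigma_finite_measure_axioms)
  have [measurable]: "f \<in> borel_measurable M" "g \<in> borel_measurable M"
    using f g by (simp_all add: sq_int_def)
  have "integrable (M \<Otimes>\<^sub>M M) (\<lambda>(u, v). f u * K1 u v * g v)"
  proof (rule Bochner_Integration.integrable_bound)
    show "integrable (M \<Otimes>\<^sub>M M) (\<lambda>(u, v). f u * g v)"
      using f g by (intro P.integrable_product_mult sq_int_integrable)
    show "(\<lambda>(u, v). f u * K1 u v * g v) \<in> borel_measurable (M \<Otimes>\<^sub>M M)"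
      unfolding K1_def by measurable
    show "AE p in M \<Otimes>\<^sub>M M. norm ((\<lambda>(u, v). f u * K1 u v * g v) p) \<le> norm ((\<lambda>(u, v). f u * g v) p)"
      by (intro AE_I2) (auto simp: K1_def abs_mult)
  qed
  have swap: "K1 u v * g v = g v * K1 v u" for u v
    by (simp add: K1_sym)
  have "l2_inner (Top f) g = (LINT v|M. LINT u|M. f u * K1 u v * g v)"
    by (simp add: l2_inner_def Top_def)
  also have "\<dots> = (LINT u|M. LINT v|M. f u * K1 u v * g v)"
    by (rule P.Fubini_integral) fact
  also have "\<dots> = l2_inner f (Top g)"
    by (simp add: l2_inner_def Top_def mult.assoc swap)
  finally show "l2_inner (Top f) g = l2_inner f (Top g)" .
qed

section \<open>Eigenvalues and eigenfunctions\<close>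

lemma AE_zero_if_indefinite_integral_zero:
  fixes g :: "real \<Rightarrow> real"
  assumes g: "g integrable_on {a..b}" and zero: "\<And>x. x \<in> {a..b} \<Longrightarrow> integral {a..x} g = 0"
  shows "AE x in lebesgue. x \<in> {a..b} \<longrightarrow> g x = 0"
proof -
  define G where "G x = (if x \<in> {a..b} then g x else 0)" for x
  have "G integrable_on UNIV"
    unfolding G_def[abs_def] integrable_restrict_UNIV by (rule g)
  then have "G integrable_on cbox c d" for c d
    by (rule integrable_on_subcbox) simp
  \<comment> \<open>Lebesgue differentiation theorem\<close>
  then obtain N where "negligible N" and lebesgue_point: "\<And>x e. x \<notin> N \<Longrightarrow> 0 < e \<Longrightarrow>
      \<exists>d>0. \<forall>h. 0 < h \<and> h < d \<longrightarrow> norm (integral (cbox x (x + h *\<^sub>R One)) G /\<^sub>R h ^ DIM(real) - G x) < e"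
    using integrable_ccontinuous_explicit by blast
  have "g x = 0" if x: "x \<in> {a..<b}" and "x \<notin> N" for x
  proof (rule ccontr)
    assume "g x \<noteq> 0"
    then obtain d where "d > 0" and d: "\<And>h. 0 < h \<Longrightarrow> h < d \<Longrightarrow> \<bar>integral {x..x + h} G / h - G x\<bar> < \<bar>g x\<bar>"
      using lebesgue_point[OF \<open>x \<notin> N\<close>, of "\<bar>g x\<bar>"] by (auto simp: divide_inverse_commute)
    define h where "h = min (d/2) (b - x)"
    have h: "0 < h" "h < d" "x + h \<le> b"
      using x \<open>d > 0\<close> by (auto simp: h_def)
    have "integral {x..x + h} G = integral {x..x + h} g"
      using x h by (intro integral_cong) (auto simp: G_def)
    also have "\<dots> = integral {a..x + h} g - integral {a..x} g"
    proof -
      have "integral {a..x} g + integral {x..x + h} g = integral {a..x + h} g"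
        using x h by (intro Henstock_Kurzweil_Integration.integral_combine integrable_on_subinterval[OF g]) auto
      then show ?thesis
        by simp
    qed
    also have "\<dots> = 0"
      using x h by (simp add: zero)
    finally show False
      using d[OF h(1,2)] x by (simp add: G_def)
  qed
  then have "{x \<in> space lebesgue. \<not> (x \<in> {a..b} \<longrightarrow> g x = 0)} \<subseteq> N \<union> {b}"
    by force
  moreover have "N \<union> {b} \<in> null_sets lebesgue"
    using \<open>negligible N\<close> by (simp add: negligible_iff_null_sets[symmetric])
  ultimately show ?thesis
    by (intro AE_I'[of "N \<union> {b}"])
qed

lemma continuous_on_AE_zero_imp_zero:
  fixes h :: "real \<Rightarrow> real"
  assumes h: "continuous_on {0..pi/2} h" and zero: "AE u in M. h u = 0" and u: "u \<in> {0..pi/2}"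
  shows "h u = 0"
proof -
  have closure: "closure Ihalf = {0..pi/2}"
    by (simp add: Ihalf_def)
  have "AE x in lebesgue. x \<in> Ihalf \<longrightarrow> h x = 0"
    using zero by (subst (asm) AE_restrict_space_iff) (simp_all add: Ihalf_def)
  then have AE_in: "AE x \<in> Ihalf in lebesgue. x \<in> {x \<in> {0..pi/2}. h x = 0}"
    by (rule eventually_mono) (auto simp: Ihalf_def)
  have closed: "closed {x \<in> {0..pi/2}. h x = 0}"
    by (rule continuous_closed_preimage_constant[OF h]) simp
  have "h x = 0" if "x \<in> Ihalf" for x
    using mem_closed_if_AE_lebesgue_open[OF _ closed AE_in that] by (simp add: Ihalf_def)
  then show ?thesis
    using continuous_constant_on_closure[of Ihalf h] h u unfolding closure by blast
qed

lemma Top_has_integral: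
  assumes f: "sq_int f" and v: "v \<in> {0..pi/2}"
  shows "(f has_integral Top f v) {0..pi/2 - v}"
proof -
  have "((\<lambda>u. f u * K1 u v) has_integral Top f v) Ihalf"
    unfolding Top_def
    by (rule has_integral_integral_lebesgue_on[OF sq_int_integrable_mult[OF f sq_int_K1]])
       (simp add: Ihalf_def)
  then have "((\<lambda>u. if u \<in> {0<..<pi/2 - v} then f u else 0) has_integral Top f v) Ihalf"
    by (rule has_integral_eq[rotated]) (auto simp: K1_def Ihalf_def)
  then have "(f has_integral Top f v) {0<..<pi/2 - v}"
    using v by (subst has_integral_restrict[symmetric]) (auto simp: Ihalf_def)
  then show ?thesis
    by (simp add: has_integral_Icc_iff_Ioo)
qed

lemma Top_cong_AE:
  assumes "f \<in> borel_measurable M" and "g \<in> borel_measurable M" and "AE u in M. f u = g u"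
  shows "Top f v = Top g v"
  unfolding Top_def using assms by (intro integral_cong_AE) (auto elim: eventually_mono)

lemma Top_cmult: "Top (\<lambda>u. c * f u) v = c * Top f v"
  by (simp add: Top_def mult.assoc)

lemma reflected_ode_solution:
  fixes P :: "real \<Rightarrow> real" and w L :: real
  assumes deriv: "\<And>x. x \<in> {0..L} \<Longrightarrow> (P has_real_derivative w * P (L - x)) (at x within {0..L})"
    and P0: "P 0 = 0" and x: "x \<in> {0..L}"
  shows "P x = P L * sin (w * x) \<and> P (L - x) = P L * cos (w * x)"
proof -
  define A where "A = P L"
  have reflect: "(\<lambda>x. L - x) ` {0..L} = {0..L}"
    by (auto simp: image_iff intro!: bexI[where x = "L - x" for x])
  have deriv_reflected: "((\<lambda>x. P (L - x)) has_real_derivative - (w * P x)) (at x within {0..L})"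
    if "x \<in> {0..L}" for x
  proof -
    have "(P has_real_derivative w * P (L - (L - x))) (at (L - x) within (\<lambda>x. L - x) ` {0..L})"
      unfolding reflect using that by (intro deriv) auto
    moreover have "((\<lambda>x. L - x) has_real_derivative -1) (at x within {0..L})"
      by (auto intro!: derivative_eq_intros)
    ultimately show ?thesis
      using DERIV_image_chain by (fastforce simp: comp_def)
  qed
  define E where "E x = (P x - A * sin (w * x))^2 + (P (L - x) - A * cos (w * x))^2" for x
  have "(E has_real_derivative 0) (at x within {0..L})" if "x \<in> {0..L}" for x
  proof -
    have "(E has_real_derivative
        2 * (P x - A * sin (w * x)) * (w * P (L - x) - A * (cos (w * x) * w))
      + 2 * (P (L - x) - A * cos (w * x)) * (- (w * P x) - A * (- sin (w * x) * w)))
        (at x within {0..L})"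
      unfolding E_def
      by (rule derivative_eq_intros deriv[OF that] deriv_reflected[OF that] refl | simp add: algebra_simps)+
    then show ?thesis
      by (simp add: algebra_simps)
  qed
  then obtain c where c: "\<And>x. x \<in> {0..L} \<Longrightarrow> E x = c"
    using has_field_derivative_zero_constant[of "{0..L}" E] by auto
  have "E 0 = 0"
    by (simp add: E_def P0 A_def)
  then have "E x = 0"
    using c[OF x] c[of 0] x by simp
  then show ?thesis
    by (simp add: E_def A_def sum_power2_eq_zero_iff)
qed

lemma eigenspace_Top_cos:
  assumes "\<mu> \<noteq> 0" and f: "f \<in> eigenspace_op Top \<mu>"
  obtains A where "AE u in M. f u = A * cos (u / \<mu>)" and "A * sin (pi / (2 * \<mu>)) = A"
proof -
  from f have sq: "sq_int f" and eigen: "AE v in M. Top f v = \<mu> * f v"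
    by (auto simp: eigenspace_op_def)
  define w where "w = 1 / \<mu>"
  define g where "g = Top f"
  have g: "sq_int g" "continuous_on UNIV g"
    using sq by (simp_all add: g_def sq_int_Top continuous_Top)
  have f_eq: "AE u in M. f u = w * g u"
    using eigen by (rule eventually_mono) (simp add: g_def w_def \<open>\<mu> \<noteq> 0\<close>)
  have g_eq: "g v = w * integral {0..pi/2 - v} g" if "v \<in> {0..pi/2}" for v
  proof -
    have [measurable]: "f \<in> borel_measurable M" "g \<in> borel_measurable M"
      using sq g(1) by (simp_all add: sq_int_def)
    have "g v = Top f v"
      by (simp add: g_def)
    also have "\<dots> = Top (\<lambda>u. w * g u) v"
      by (rule Top_cong_AE[OF _ _ f_eq]) measurable
    also have "\<dots> = w * integral {0..pi/2 - v} g"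
      using Top_has_integral[OF g(1) that] by (simp add: Top_cmult integral_unique)
    finally show ?thesis .
  qed
  define P where "P x = integral {0..x} g" for x
  define A where "A = P (pi/2)"
  have "(P has_real_derivative w * P (pi/2 - x)) (at x within {0..pi/2})" if "x \<in> {0..pi/2}" for x
    using integral_has_real_derivative[OF continuous_on_subset[OF g(2)] that] g_eq[OF that]
    by (simp add: P_def[abs_def])
  then have P: "P x = A * sin (w * x) \<and> P (pi/2 - x) = A * cos (w * x)" if "x \<in> {0..pi/2}" for x
    unfolding A_def by (rule reflected_ode_solution[OF _ _ that]) (simp_all add: P_def)
  have "g v = w * A * cos (w * v)" if "v \<in> {0..pi/2}" for v
    using g_eq[OF that] P[OF that] by (simp add: P_def)
  then have "AE u in M. f u = w * w * A * cos (u / \<mu>)"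
    using f_eq by (rule_tac eventually_mono) (auto simp: Ihalf_def w_def)
  moreover have "w * w * A * sin (pi / (2 * \<mu>)) = w * w * A"
    using P[of "pi/2"] by (auto simp: A_def w_def ac_simps)
  ultimately show ?thesis
    by (rule that)
qed

lemma not_is_eigenvalue_Top_0: "\<not> is_eigenvalue Top 0"
proof
  assume "is_eigenvalue Top 0"
  then obtain f where sq: "sq_int f" and Top_AE_0: "AE v in M. Top f v = 0" and "\<not> (AE u in M. f u = 0)"
    by (auto simp: is_eigenvalue_def eigenspace_op_def)
  have Top_0: "Top f v = 0" if "v \<in> {0..pi/2}" for v
    using continuous_on_AE_zero_imp_zero[OF continuous_on_subset[OF continuous_Top[OF sq]] Top_AE_0 that]
    by simp
  have "f integrable_on {0..pi/2}"
    using Top_has_integral[OF sq, of 0] by (auto intro: has_integral_integrable)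
  moreover have "integral {0..x} f = 0" if "x \<in> {0..pi/2}" for x
    using Top_has_integral[OF sq, of "pi/2 - x"] Top_0[of "pi/2 - x"] that by (simp add: integral_unique)
  ultimately have "AE x in lebesgue. x \<in> {0..pi/2} \<longrightarrow> f x = 0"
    by (rule AE_zero_if_indefinite_integral_zero)
  then have "AE x in lebesgue. x \<in> Ihalf \<longrightarrow> f x = 0"
    by (rule eventually_mono) (auto simp: Ihalf_def)
  then have "AE u in M. f u = 0"
    by (subst AE_restrict_space_iff) (simp_all add: Ihalf_def)
  with \<open>\<not> (AE u in M. f u = 0)\<close> show False ..
qed

lemma four_int_plus_one_neq_0: "4 * real_of_int k + 1 \<noteq> 0"
proof
  assume "4 * real_of_int k + 1 = 0"
  then have "4 * k + 1 = 0"
    by linarith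
  then show False
    by presburger
qed

lemma eigenvalue_form_if_sin_eq_1:
  assumes "sin (pi / (2 * \<mu>)) = 1"
  shows "\<exists>k::int. \<mu> = 1 / (4 * real_of_int k + 1)"
proof -
  have "\<mu> \<noteq> 0"
    using assms by auto
  obtain n :: int where "pi / (2 * \<mu>) = (2 * real_of_int n + 1/2) * pi"
    using assms sin_eq_1 by blast
  then have "1 / (2 * \<mu>) * pi = (2 * real_of_int n + 1/2) * pi"
    by (simp only: times_divide_eq_left mult_1)
  then have "1 / (2 * \<mu>) = 2 * real_of_int n + 1/2"
    by (metis mult_right_cancel pi_neq_zero)
  then have "(4 * real_of_int n + 1) * \<mu> = 1"
    using \<open>\<mu> \<noteq> 0\<close> by (simp add: field_simps)
  then have "\<mu> = 1 / (4 * real_of_int n + 1)"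
    using four_int_plus_one_neq_0[of n] by (simp add: eq_divide_eq mult.commute)
  then show ?thesis ..
qed

lemma has_integral_cos_scaled:
  fixes a c :: real
  assumes "a \<noteq> 0" and "0 \<le> c"
  shows "((\<lambda>u. cos (a * u)) has_integral sin (a * c) / a) {0..c}"
proof -
  have "((\<lambda>u. sin (a * u) / a) has_real_derivative cos (a * x)) (at x within {0..c})" for x
    using \<open>a \<noteq> 0\<close> by (auto intro!: derivative_eq_intros)
  then have "((\<lambda>u. cos (a * u)) has_integral sin (a * c) / a - sin (a * 0) / a) {0..c}"
    using \<open>0 \<le> c\<close> by (intro fundamental_theorem_of_calculus) (simp_all add: has_real_derivative_iff_has_vector_derivative)
  then show ?thesis
    by simp
qed

lemma cos_mem_eigenspace_Top:
  fixes k :: int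
  defines "a \<equiv> 4 * real_of_int k + 1"
  shows "(\<lambda>u. cos (a * u)) \<in> eigenspace_op Top (1 / a)"
proof -
  have a: "a \<noteq> 0"
    by (simp add: a_def four_int_plus_one_neq_0)
  have quarter: "a * pi / 2 = pi/2 + 2 * pi * real_of_int k"
    by (simp add: a_def algebra_simps)
  have sq: "sq_int (\<lambda>u. cos (a * u))"
    by (intro sq_int_continuous continuous_intros)
  have "Top (\<lambda>u. cos (a * u)) v = 1 / a * cos (a * v)" if "v \<in> {0..pi/2}" for v
  proof -
    have "Top (\<lambda>u. cos (a * u)) v = sin (a * (pi/2 - v)) / a"
      using has_integral_unique[OF Top_has_integral[OF sq that] has_integral_cos_scaled[OF a]] that
      by simp
    also have "sin (a * (pi/2 - v)) = cos (a * v)"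
      by (simp add: right_diff_distrib sin_diff quarter sin_add cos_add sin_int_2pin cos_int_2pin)
    finally show ?thesis
      by simp
  qed
  then show ?thesis
    unfolding eigenspace_op_def using sq by (auto intro!: AE_I2 simp: Ihalf_def)
qed

lemma cos_not_AE_zero: "\<not> (AE u in M. cos (a * u) = 0)"
proof
  assume "AE u in M. cos (a * u) = 0"
  moreover have "continuous_on {0..pi/2} (\<lambda>u. cos (a * u))"
    by (intro continuous_intros)
  ultimately show False
    using continuous_on_AE_zero_imp_zero[of "\<lambda>u. cos (a * u)" 0] by simp
qed

lemma is_eigenvalue_Top_iff: "is_eigenvalue Top \<mu> \<longleftrightarrow> (\<exists>k::int. \<mu> = 1 / (4 * real_of_int k + 1))"
proof
  assume "is_eigenvalue Top \<mu>"
  then obtain f where f: "f \<in> eigenspace_op Top \<mu>" and nonzero: "\<not> (AE u in M. f u = 0)"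
    by (auto simp: is_eigenvalue_def)
  have "\<mu> \<noteq> 0"
    using \<open>is_eigenvalue Top \<mu>\<close> not_is_eigenvalue_Top_0 by auto
  then obtain A where A: "AE u in M. f u = A * cos (u / \<mu>)" and A_sin: "A * sin (pi / (2 * \<mu>)) = A"
    using f by (rule eigenspace_Top_cos)
  have "A \<noteq> 0"
    using A nonzero by (auto elim: eventually_mono)
  with A_sin have "sin (pi / (2 * \<mu>)) = 1"
    by simp
  then show "\<exists>k::int. \<mu> = 1 / (4 * real_of_int k + 1)"
    by (rule eigenvalue_form_if_sin_eq_1)
next
  assume "\<exists>k::int. \<mu> = 1 / (4 * real_of_int k + 1)"
  then obtain k :: int where "\<mu> = 1 / (4 * real_of_int k + 1)" ..
  then show "is_eigenvalue Top \<mu>"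
    unfolding is_eigenvalue_def by (auto intro!: bexI[OF _ cos_mem_eigenspace_Top[of k]] cos_not_AE_zero)
qed

lemma l2_inner_eigenspaces_orthogonal:
  assumes T: "self_adjoint_op T" "\<And>h. sq_int h \<Longrightarrow> sq_int (T h)"
    and f: "f \<in> eigenspace_op T \<mu>" and g: "g \<in> eigenspace_op T \<nu>" and "\<mu> \<noteq> \<nu>"
  shows "l2_inner f g = 0"
proof -
  have eigen: "l2_inner (T h) k = c * l2_inner h k"
    if h: "h \<in> eigenspace_op T c" and k: "sq_int k" for h k c
  proof -
    from h have "sq_int h" "AE v in M. T h v = c * h v"
      by (auto simp: eigenspace_op_def)
    moreover have "sq_int (T h)"
      using T(2) \<open>sq_int h\<close> .
    ultimately have "(LINT v|M. T h v * k v) = (LINT v|M. c * (h v * k v))"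
      using k by (intro integral_cong_AE) (auto simp: sq_int_def elim: eventually_mono)
    then show ?thesis
      by (simp add: l2_inner_def)
  qed
  have sq: "sq_int f" "sq_int g"
    using f g by (simp_all add: eigenspace_op_def)
  have "\<mu> * l2_inner f g = l2_inner (T f) g"
    using eigen[OF f sq(2)] ..
  also have "\<dots> = l2_inner f (T g)"
    using T(1) sq by (simp add: self_adjoint_op_def)
  also have "\<dots> = \<nu> * l2_inner f g"
    using eigen[OF g sq(1)] by (simp add: l2_inner_def mult.commute)
  finally show ?thesis
    using \<open>\<mu> \<noteq> \<nu>\<close> by simp
qed

lemma eigenspace_Top_cos_multiple:
  assumes "f \<in> eigenspace_op Top (1 / (4 * real_of_int k + 1))"
  shows "\<exists>c. AE u in M. f u = c * cos ((4 * real_of_int k + 1) * u)"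
proof -
  have "1 / (4 * real_of_int k + 1) \<noteq> 0"
    by (simp add: four_int_plus_one_neq_0)
  then obtain A where "AE u in M. f u = A * cos (u / (1 / (4 * real_of_int k + 1)))"
    using assms by (rule eigenspace_Top_cos)
  then show ?thesis
    by (auto simp: mult.commute elim!: eventually_mono)
qed

lemma l2_inner_cos_orthogonal:
  fixes k j :: int
  assumes "k \<noteq> j"
  shows "l2_inner (\<lambda>u. cos ((4 * real_of_int k + 1) * u)) (\<lambda>u. cos ((4 * real_of_int j + 1) * u)) = 0"
proof -
  have "1 / (4 * real_of_int k + 1) \<noteq> 1 / (4 * real_of_int j + 1)"
  proof
    assume "1 / (4 * real_of_int k + 1) = 1 / (4 * real_of_int j + 1)"
    then have "4 * real_of_int k + 1 = 4 * real_of_int j + 1"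
      by simp
    with \<open>k \<noteq> j\<close> show False
      by simp
  qed
  from l2_inner_eigenspaces_orthogonal[OF self_adjoint_op_Top sq_int_Top
      cos_mem_eigenspace_Top[of k] cos_mem_eigenspace_Top[of j] this]
  show ?thesis .
qed

theorem lemma3:
  shows "compact_op Top \<and> self_adjoint_op Top
    \<and> {\<mu>. is_eigenvalue Top \<mu>} = {1 / (4 * real_of_int k + 1) | k. True}
    \<and> (\<forall>k::int. (\<lambda>u. cos ((4 * real_of_int k + 1) * u)) \<in> eigenspace_op Top (1 / (4 * real_of_int k + 1))
          \<and> (\<forall>f \<in> eigenspace_op Top (1 / (4 * real_of_int k + 1)).
               \<exists>c. AE u in M. f u = c * cos ((4 * real_of_int k + 1) * u)))
    \<and> (\<forall>k j::int. k \<noteq> j \<longrightarrow>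
          l2_inner (\<lambda>u. cos ((4 * real_of_int k + 1) * u)) (\<lambda>u. cos ((4 * real_of_int j + 1) * u)) = 0)"
proof (intro conjI allI impI ballI)
  show "{\<mu>. is_eigenvalue Top \<mu>} = {1 / (4 * real_of_int k + 1) | k. True}"
    by (auto simp: is_eigenvalue_Top_iff)
qed (simp_all add: compact_op_Top self_adjoint_op_Top cos_mem_eigenspace_Top
                   eigenspace_Top_cos_multiple l2_inner_cos_orthogonal)

end
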